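(* Let $0<\alpha<1$, let $x>0$ be fixed, let $y$ be a polynomial, and for an integer $n\ge 2$ put $h=x/n$ and $y_j=y(jh)$. Then, as $n\to\infty$, $$y^{(\alpha)}(x)=\frac{1}{\Gamma(2-\alpha)h^\alpha}\sum_{k=0}^n \delta_k^{(\alpha)} y_{n-k}+O\left(h^{2}\right).$$
   Context: The Caputo derivative of order $\alpha\in(0,1)$ is $y^{(\alpha)}(x)=\frac{1}{\Gamma(1-\alpha)}\int_0^x \frac{y'(\xi)}{(x-\xi)^{\alpha}}\,d\xi$. For a given integer $n\ge 2$ define $\sigma_0^{(\alpha)}=1$, $\sigma_n^{(\alpha)}=(n-1)^{1-\alpha}-n^{1-\alpha}$, and $\sigma_k^{(\alpha)}=(k-1)^{1-\alpha}-2k^{1-\alpha}+(k+1)^{1-\alpha}$ for $1\le k\le n-1$. Define $\delta_0^{(\alpha)}=\sigma_0^{(\alpha)}-\zeta(\alpha-1)$, $\delta_1^{(\alpha)}=\sigma_1^{(\alpha)}+2\zeta(\alpha-1)$, $\delta_2^{(\alpha)}=\sigma_2^{(\alpha)}-\zeta(\alpha-1)$, and $\delta_k^{(\alpha)}=\sigma_k^{(\alpha)}$ for $3\le k\le n$, where $\zeta$ is the Riemann zeta function. *)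

theory Defs
  imports "HOL-Analysis.Analysis" "HOL-Computational_Algebra.Polynomial"
begin

definition caputo :: "real \<Rightarrow> (real \<Rightarrow> real) \<Rightarrow> real \<Rightarrow> real" where
  "caputo \<alpha> y x = (1 / Gamma (1 - \<alpha>)) *
     integral {0..x} (\<lambda>\<xi>. deriv y \<xi> / (x - \<xi>) powr \<alpha>)"

text \<open>Riemann zeta function on real arguments s > -1, s \<noteq> 1 (analytic continuation),
  given by the Euler--Maclaurin limit formula; the library has no zeta function.\<close>
definition zeta_real :: "real \<Rightarrow> real" where
  "zeta_real s = lim (\<lambda>N::nat. (\<Sum>k=1..N. real k powr (- s))
                       + real N powr (1 - s) / (s - 1) - real N powr (- s) / 2)"

definition sigma_coef :: "real \<Rightarrow> nat \<Rightarrow> nat \<Rightarrow> real" where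
  "sigma_coef \<alpha> n k =
     (if k = 0 then 1
      else if k = n then real (n - 1) powr (1 - \<alpha>) - real n powr (1 - \<alpha>)
      else real (k - 1) powr (1 - \<alpha>) - 2 * real k powr (1 - \<alpha>) + real (k + 1) powr (1 - \<alpha>))"

definition delta_coef :: "real \<Rightarrow> nat \<Rightarrow> nat \<Rightarrow> real" where
  "delta_coef \<alpha> n k =
     (if k = 0 then sigma_coef \<alpha> n 0 - zeta_real (\<alpha> - 1)
      else if k = 1 then sigma_coef \<alpha> n 1 + 2 * zeta_real (\<alpha> - 1)
      else if k = 2 then sigma_coef \<alpha> n 2 - zeta_real (\<alpha> - 1)
      else sigma_coef \<alpha> n k)"

end

theory Submission
  imports Defs
begin

text \<open>
  Expanding the polynomial around \<open>x\<close>, \<open>y(\<xi>) = \<Sum>\<^sub>i c\<^sub>i (x - \<xi>)\<^sup>i\<close>, both the Caputo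
  derivative and the scheme are linear in \<open>y\<close>, so it suffices to treat the monomials
  \<open>(x - \<xi>)\<^sup>i\<close>. For these the scheme samples \<open>(k h)\<^sup>i\<close>, and after scaling the error is
  \<open>h\<^bsup>i-\<alpha>\<^esup>\<close> times the defect between the discrete moment \<open>\<Sum>\<^sub>k \<delta>\<^sub>k k\<^sup>i\<close> and its continuous
  counterpart \<open>-(1-\<alpha>) i/(i-\<alpha>) n\<^bsup>i-\<alpha>\<^esup>\<close>. Summation by parts writes the \<open>\<sigma>\<close>-moment as a sum
  of cell-wise trapezoidal errors of \<open>t\<^bsup>1-\<alpha>\<^esup>\<close> against \<open>t\<^sup>i\<close>. For \<open>i \<le> 1\<close> the defect vanishes;
  for \<open>i = 2\<close> it is twice the Euler--Maclaurin remainder of \<open>\<zeta>(\<alpha>-1)\<close>, hence \<open>O(n\<^sup>-\<^sup>\<alpha>)\<close>;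
  for \<open>i \<ge> 3\<close> a mean value argument bounds the \<open>k\<close>-th cell by \<open>O(n\<^bsup>i-3\<^esup> k\<^sup>-\<^sup>\<alpha>)\<close>, and the
  \<open>\<zeta>\<close>-correction is bounded. In all cases the defect is \<open>O(n\<^bsup>i-2-\<alpha>\<^esup>)\<close>, i.e. the error is
  \<open>O(h\<^sup>2)\<close>.
\<close>

section \<open>The Euler--Maclaurin approximants of \<open>\<zeta>(\<alpha> - 1)\<close>\<close>

definition zeta_approx :: "real \<Rightarrow> nat \<Rightarrow> real" where
  "zeta_approx \<alpha> N = (\<Sum>k=1..N. real k powr (1 - \<alpha>))
     + real N powr (2 - \<alpha>) / (\<alpha> - 2) - real N powr (1 - \<alpha>) / 2"

lemma zeta_real_eq_lim_zeta_approx: "zeta_real (\<alpha> - 1) = lim (zeta_approx \<alpha>)"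
proof -
  have "(\<lambda>N::nat. (\<Sum>k=1..N. real k powr (- (\<alpha> - 1)))
          + real N powr (1 - (\<alpha> - 1)) / ((\<alpha> - 1) - 1) - real N powr (- (\<alpha> - 1)) / 2)
        = zeta_approx \<alpha>"
    by (rule ext) (simp add: zeta_approx_def algebra_simps)
  thus ?thesis by (simp add: zeta_real_def)
qed

lemma has_real_derivative_powr_one_minus:
  assumes "u > 0"
  shows "((\<lambda>u. u powr (1 - \<alpha>)) has_real_derivative (1 - \<alpha>) * u powr (- \<alpha>)) (at u)"
  using has_real_derivative_powr[OF assms, of "1 - \<alpha>"] by simp

text \<open>The trapezoidal rule overestimates the concave \<open>t\<^bsup>1-\<alpha>\<^esup>\<close> on \<open>[N, N+1]\<close>, by at most a
  telescoping amount.\<close>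

lemma powr_trapezoid_error_bounds:
  fixes \<alpha> N :: real
  assumes \<alpha>: "0 < \<alpha>" "\<alpha> < 1" and N: "N > 0"
  defines "d \<equiv> (N + 1) powr (2 - \<alpha>) / (2 - \<alpha>) - N powr (2 - \<alpha>) / (2 - \<alpha>)
                - (N powr (1 - \<alpha>) + (N + 1) powr (1 - \<alpha>)) / 2"
  shows "0 \<le> d \<and> d \<le> (1 - \<alpha>) / 2 * (N powr (- \<alpha>) - (N + 1) powr (- \<alpha>))"
proof -
  define E where "E u = u powr (2 - \<alpha>) / (2 - \<alpha>) - N powr (2 - \<alpha>) / (2 - \<alpha>)
                     - (u - N) / 2 * (N powr (1 - \<alpha>) + u powr (1 - \<alpha>))" for u
  define E' where "E' u = u powr (1 - \<alpha>) - (N powr (1 - \<alpha>) + u powr (1 - \<alpha>)) / 2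
                     - (u - N) / 2 * ((1 - \<alpha>) * u powr (- \<alpha>))" for u
  have "(E has_real_derivative E' u) (at u)" if "u > 0" for u
    by (insert \<alpha> that, unfold E_def E'_def, (rule derivative_eq_intros refl | simp)+)
  then obtain c where c: "N < c" "c < N + 1" "E (N + 1) - E N = (N + 1 - N) * E' c"
    using MVT2[of N "N + 1" E E'] N by force
  obtain c' where c': "N < c'" "c' < c"
    "c powr (1 - \<alpha>) - N powr (1 - \<alpha>) = (c - N) * ((1 - \<alpha>) * c' powr (- \<alpha>))"
    using MVT2[of N c "\<lambda>u. u powr (1 - \<alpha>)" "\<lambda>u. (1 - \<alpha>) * u powr (- \<alpha>)"]
      has_real_derivative_powr_one_minus N c by force
  have "d = E' c" using c by (simp add: E_def d_def)
  also have "E' c = (1 - \<alpha>) / 2 * ((c - N) * (c' powr (- \<alpha>) - c powr (- \<alpha>)))"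
  proof -
    have "E' c = (c powr (1 - \<alpha>) - N powr (1 - \<alpha>)) / 2 - (c - N) / 2 * ((1 - \<alpha>) * c powr - \<alpha>)"
      by (simp add: E'_def field_simps)
    also have "\<dots> = (1 - \<alpha>) / 2 * ((c - N) * (c' powr (- \<alpha>) - c powr (- \<alpha>)))"
      unfolding c'(3) by (simp add: field_simps)
    finally show ?thesis .
  qed
  finally have d: "d = (1 - \<alpha>) / 2 * ((c - N) * (c' powr (- \<alpha>) - c powr (- \<alpha>)))" .
  have m1: "c powr (- \<alpha>) \<le> c' powr (- \<alpha>)" using c' N \<alpha> by (intro powr_mono2') auto
  have m2: "c' powr (- \<alpha>) \<le> N powr (- \<alpha>)" using c' N \<alpha> by (intro powr_mono2') auto
  have m3: "(N + 1) powr (- \<alpha>) \<le> c powr (- \<alpha>)" using c N \<alpha> by (intro powr_mono2') auto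
  have "0 \<le> (c - N) * (c' powr (- \<alpha>) - c powr (- \<alpha>))" using c m1 by simp
  moreover have "(c - N) * (c' powr (- \<alpha>) - c powr (- \<alpha>)) \<le> 1 * (N powr (- \<alpha>) - (N + 1) powr (- \<alpha>))"
    using c m1 m2 m3 by (intro mult_mono) auto
  ultimately show ?thesis unfolding d using \<alpha> by (simp add: mult_left_mono)
qed

lemma zeta_approx_step_bounds:
  assumes \<alpha>: "0 < \<alpha>" "\<alpha> < 1" and N: "N \<ge> 1"
  shows "0 \<le> zeta_approx \<alpha> N - zeta_approx \<alpha> (Suc N)
    \<and> zeta_approx \<alpha> N - zeta_approx \<alpha> (Suc N)
        \<le> (1 - \<alpha>) / 2 * (real N powr (- \<alpha>) - real (Suc N) powr (- \<alpha>))"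
proof -
  have m: "y / (\<alpha> - 2) = - (y / (2 - \<alpha>))" for y by (simp add: divide_simps algebra_simps)
  have "zeta_approx \<alpha> N - zeta_approx \<alpha> (Suc N)
      = (real N + 1) powr (2 - \<alpha>) / (2 - \<alpha>) - real N powr (2 - \<alpha>) / (2 - \<alpha>)
        - (real N powr (1 - \<alpha>) + (real N + 1) powr (1 - \<alpha>)) / 2"
    unfolding zeta_approx_def m by (simp add: add.commute add_divide_distrib)
  then show ?thesis using powr_trapezoid_error_bounds[OF \<alpha>, of "real N"] N by (simp add: add.commute)
qed

lemma zeta_approx_diff_bounds:
  assumes \<alpha>: "0 < \<alpha>" "\<alpha> < 1" and N: "N \<ge> 1"
  shows "0 \<le> zeta_approx \<alpha> N - zeta_approx \<alpha> (N + j)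
    \<and> zeta_approx \<alpha> N - zeta_approx \<alpha> (N + j)
        \<le> (1 - \<alpha>) / 2 * (real N powr (- \<alpha>) - real (N + j) powr (- \<alpha>))"
proof (induction j)
  case 0
  then show ?case by simp
next
  case (Suc j)
  have "N + j \<ge> 1" using N by simp
  note step = zeta_approx_step_bounds[OF \<alpha> this]
  have "(1 - \<alpha>) / 2 * (real N powr (- \<alpha>) - real (N + j) powr (- \<alpha>))
      + (1 - \<alpha>) / 2 * (real (N + j) powr (- \<alpha>) - real (Suc (N + j)) powr (- \<alpha>))
    = (1 - \<alpha>) / 2 * (real N powr (- \<alpha>) - real (N + Suc j) powr (- \<alpha>))"
    by (simp add: algebra_simps)
  then show ?case using step Suc by (simp only: add_Suc_right) linarith
qed

text \<open>Since \<open>lim\<close> is junk for divergent sequences, convergence must be shown first: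
  the approximants decrease and are bounded below.\<close>

lemma zeta_approx_minus_zeta_bounds:
  assumes \<alpha>: "0 < \<alpha>" "\<alpha> < 1" and N: "N \<ge> 1"
  shows "0 \<le> zeta_approx \<alpha> N - zeta_real (\<alpha> - 1)
    \<and> zeta_approx \<alpha> N - zeta_real (\<alpha> - 1) \<le> (1 - \<alpha>) / 2 * real N powr (- \<alpha>)"
proof -
  have tail: "0 \<le> zeta_approx \<alpha> M - zeta_approx \<alpha> (M + j)
      \<and> zeta_approx \<alpha> M - zeta_approx \<alpha> (M + j) \<le> (1 - \<alpha>) / 2 * real M powr (- \<alpha>)"
    if "M \<ge> 1" for M j
  proof -
    have "0 \<le> (1 - \<alpha>) / 2 * real (M + j) powr (- \<alpha>)" using \<alpha> by simp
    then show ?thesis using zeta_approx_diff_bounds[OF \<alpha> that, of j] by (simp add: right_diff_distrib)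
  qed
  define g where "g m = zeta_approx \<alpha> (Suc m)" for m
  have "decseq g" unfolding decseq_Suc_iff g_def using tail[of "Suc _" 1] by simp
  moreover have "\<forall>i. g 0 - (1 - \<alpha>) / 2 \<le> g i"
    using tail[of 1] unfolding g_def by (simp add: field_simps)
  ultimately obtain L where "g \<longlonglongrightarrow> L" by (rule decseq_convergent)
  hence lim: "zeta_approx \<alpha> \<longlonglongrightarrow> L" unfolding g_def by (rule LIMSEQ_imp_Suc)
  hence z: "zeta_real (\<alpha> - 1) = L" by (simp add: zeta_real_eq_lim_zeta_approx limI)
  have t: "(\<lambda>j. zeta_approx \<alpha> N - zeta_approx \<alpha> (j + N)) \<longlonglongrightarrow> zeta_approx \<alpha> N - L"
    by (intro tendsto_diff tendsto_const LIMSEQ_ignore_initial_segment lim)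
  have "0 \<le> zeta_approx \<alpha> N - L"
    by (rule LIMSEQ_le_const[OF t]) (use tail[OF N] in \<open>auto simp: add.commute\<close>)
  moreover have "zeta_approx \<alpha> N - L \<le> (1 - \<alpha>) / 2 * real N powr (- \<alpha>)"
    by (rule LIMSEQ_le_const2[OF t]) (use tail[OF N] in \<open>auto simp: add.commute\<close>)
  ultimately show ?thesis using z by simp
qed

section \<open>Summation by parts for the coefficients\<close>

text \<open>\<open>\<sigma>\<^sub>k\<close> is the second difference of \<open>k\<^bsup>1-\<alpha>\<^esup>\<close>, corrected at both ends.\<close>

lemma sigma_partial_sum_by_parts:
  assumes "Suc j \<le> n"
  shows "(\<Sum>k<Suc j. sigma_coef \<alpha> n k * a k)
    = - (\<Sum>k<Suc j. (a (Suc k) - a k) * (real (Suc k) powr (1 - \<alpha>) - real k powr (1 - \<alpha>)))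
      + a (Suc j) * (real (Suc j) powr (1 - \<alpha>) - real j powr (1 - \<alpha>))"
proof -
  define f where "f k = real k powr (1 - \<alpha>)" for k
  have "(\<Sum>k<Suc j. sigma_coef \<alpha> n k * a k)
      = - (\<Sum>k<Suc j. (a (Suc k) - a k) * (f (Suc k) - f k)) + a (Suc j) * (f (Suc j) - f j)"
    using assms
  proof (induction j)
    case 0
    then show ?case by (simp add: sigma_coef_def f_def algebra_simps)
  next
    case (Suc j)
    have \<sigma>: "sigma_coef \<alpha> n (Suc j) = f j - 2 * f (Suc j) + f (Suc (Suc j))"
      using Suc.prems by (simp add: sigma_coef_def f_def)
    show ?case using Suc by (simp add: \<sigma> algebra_simps)
  qed
  then show ?thesis by (simp add: f_def)
qed

lemma sigma_sum_by_parts: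
  assumes "n \<ge> 1"
  shows "(\<Sum>k=0..n. sigma_coef \<alpha> n k * a k)
    = - (\<Sum>k<n. (a (Suc k) - a k) * (real (Suc k) powr (1 - \<alpha>) - real k powr (1 - \<alpha>)))"
proof -
  obtain j where n: "n = Suc j" using assms by (cases n) auto
  have "(\<Sum>k=0..n. sigma_coef \<alpha> n k * a k)
      = (\<Sum>k<Suc j. sigma_coef \<alpha> n k * a k) + sigma_coef \<alpha> n n * a n"
    unfolding n by (simp add: atLeast0AtMost lessThan_Suc_atMost[symmetric])
  also have "sigma_coef \<alpha> n n = real j powr (1 - \<alpha>) - real (Suc j) powr (1 - \<alpha>)"
    by (simp add: sigma_coef_def n)
  finally show ?thesis using sigma_partial_sum_by_parts[of j n \<alpha> a] n by (simp add: algebra_simps)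
qed

lemma delta_sum_eq_sigma_sum:
  assumes "n \<ge> 2"
  shows "(\<Sum>k=0..n. delta_coef \<alpha> n k * b k)
    = (\<Sum>k=0..n. sigma_coef \<alpha> n k * b k) - zeta_real (\<alpha> - 1) * (b 0 - 2 * b 1 + b 2)"
proof -
  define z where "z = zeta_real (\<alpha> - 1)"
  define corr where "corr (k :: nat) = (if k = 0 then - z * b 0 else if k = 1 then 2 * z * b 1
                               else if k = 2 then - z * b 2 else 0)" for k
  have "(\<Sum>k=0..n. delta_coef \<alpha> n k * b k) = (\<Sum>k=0..n. sigma_coef \<alpha> n k * b k + corr k)"
    by (rule sum.cong) (auto simp: delta_coef_def corr_def z_def algebra_simps)
  also have "\<dots> = (\<Sum>k=0..n. sigma_coef \<alpha> n k * b k) + (\<Sum>k=0..n. corr k)"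
    by (rule sum.distrib)
  also have "(\<Sum>k=0..n. corr k) = (\<Sum>k\<in>{0, 1, 2}. corr k)"
    using assms by (intro sum.mono_neutral_right) (auto simp: corr_def)
  finally show ?thesis by (simp add: corr_def z_def algebra_simps)
qed

section \<open>The moment defect\<close>

text \<open>Up to the factor \<open>-h\<^bsup>i-\<alpha>\<^esup>/\<Gamma>(2-\<alpha>)\<close>, the error of the scheme on \<open>(x - \<xi>)\<^sup>i\<close>
  (lemma \<open>monomial_error_eq\<close>).\<close>

definition moment_defect :: "real \<Rightarrow> nat \<Rightarrow> nat \<Rightarrow> real" where
  "moment_defect \<alpha> n i = (1 - \<alpha>) * real i / (real i - \<alpha>) * real n powr (real i - \<alpha>)
     + (\<Sum>k=0..n. delta_coef \<alpha> n k * real k ^ i)"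

lemma moment_defect_eq_sigma_moment:
  assumes "n \<ge> 2"
  shows "moment_defect \<alpha> n i = (1 - \<alpha>) * real i / (real i - \<alpha>) * real n powr (real i - \<alpha>)
    + (\<Sum>k=0..n. sigma_coef \<alpha> n k * real k ^ i) - zeta_real (\<alpha> - 1) * (0 ^ i - 2 + 2 ^ i)"
  using delta_sum_eq_sigma_sum[OF assms, of \<alpha> "\<lambda>k. real k ^ i"] by (simp add: moment_defect_def)

lemma moment_defect_0:
  assumes "n \<ge> 2"
  shows "moment_defect \<alpha> n 0 = 0"
  using moment_defect_eq_sigma_moment[OF assms] sigma_sum_by_parts[of n \<alpha> "\<lambda>k. 1"] assms by simp

lemma moment_defect_1:
  assumes "n \<ge> 2" and "\<alpha> < 1"
  shows "moment_defect \<alpha> n 1 = 0"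
proof -
  have "(\<Sum>k=0..n. sigma_coef \<alpha> n k * real k)
      = - (\<Sum>k<n. real (Suc k) powr (1 - \<alpha>) - real k powr (1 - \<alpha>))"
    using sigma_sum_by_parts[of n \<alpha> real] assms by simp
  also have "\<dots> = - (real n powr (1 - \<alpha>))"
    using sum_lessThan_telescope[of "\<lambda>k. real k powr (1 - \<alpha>)" n] by simp
  finally show ?thesis using moment_defect_eq_sigma_moment[OF assms(1), of \<alpha> 1] assms by simp
qed

lemma moment_defect_2_eq:
  assumes "n \<ge> 2" and "\<alpha> < 1"
  shows "moment_defect \<alpha> n 2 = 2 * (zeta_approx \<alpha> n - zeta_real (\<alpha> - 1))"
proof -
  have parts: "(\<Sum>k<m. (2 * real k + 1) * (real (Suc k) powr (1 - \<alpha>) - real k powr (1 - \<alpha>)))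
      = (2 * real m + 1) * real m powr (1 - \<alpha>) - 2 * (\<Sum>k=1..m. real k powr (1 - \<alpha>))" for m
    by (induction m) (simp_all add: algebra_simps)
  have "real n * real n powr (1 - \<alpha>) = real n powr (1 + (1 - \<alpha>))"
    using assms by (simp add: powr_mult_base)
  also have "1 + (1 - \<alpha>) = 2 - \<alpha>" by simp
  finally have n2: "real n * real n powr (1 - \<alpha>) = real n powr (2 - \<alpha>)" .
  have "(\<Sum>k=0..n. sigma_coef \<alpha> n k * real k ^ 2)
      = 2 * (\<Sum>k=1..n. real k powr (1 - \<alpha>)) - (2 * real n + 1) * real n powr (1 - \<alpha>)"
    using sigma_sum_by_parts[of n \<alpha> "\<lambda>k. real k ^ 2"] assms parts[of n]
    by (simp add: power2_eq_square algebra_simps)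
  also have "\<dots> = 2 * (\<Sum>k=1..n. real k powr (1 - \<alpha>)) - 2 * real n powr (2 - \<alpha>) - real n powr (1 - \<alpha>)"
    unfolding n2[symmetric] by (simp add: algebra_simps)
  finally have sigma2: "(\<Sum>k=0..n. sigma_coef \<alpha> n k * real k ^ 2)
      = 2 * (\<Sum>k=1..n. real k powr (1 - \<alpha>)) - 2 * real n powr (2 - \<alpha>) - real n powr (1 - \<alpha>)" .
  show ?thesis
    unfolding moment_defect_eq_sigma_moment[OF assms(1)] sigma2 zeta_approx_def
    using assms by (simp add: field_simps)
qed

lemma moment_defect_2_bound:
  assumes "0 < \<alpha>" "\<alpha> < 1" and "n \<ge> 2"
  shows "\<bar>moment_defect \<alpha> n 2\<bar> \<le> (1 - \<alpha>) * real n powr (- \<alpha>)"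
  using moment_defect_2_eq[OF assms(3,2)] zeta_approx_minus_zeta_bounds[OF assms(1,2), of n] assms(3)
  by simp

text \<open>The defect of the \<open>i\<close>-th moment on the cell \<open>[k, k+1]\<close>, divided by \<open>1 - \<alpha>\<close>.\<close>

definition cell_defect :: "real \<Rightarrow> nat \<Rightarrow> real \<Rightarrow> real" where
  "cell_defect \<alpha> i k = real i / (real i - \<alpha>) * ((k + 1) powr (real i - \<alpha>) - k powr (real i - \<alpha>))
     - ((k + 1) ^ i - k ^ i) * ((k + 1) powr (1 - \<alpha>) - k powr (1 - \<alpha>)) / (1 - \<alpha>)"

lemma moment_defect_eq_cell_defect_sum:
  assumes \<alpha>: "0 < \<alpha>" "\<alpha> < 1" and n: "n \<ge> 2" and i: "i \<ge> 1"
  shows "moment_defect \<alpha> n i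
    = (1 - \<alpha>) * (\<Sum>k<n. cell_defect \<alpha> i (real k)) - zeta_real (\<alpha> - 1) * (2 ^ i - 2)"
proof -
  have tel: "real n powr (real i - \<alpha>)
      = (\<Sum>k<n. (real k + 1) powr (real i - \<alpha>) - real k powr (real i - \<alpha>))"
    using sum_lessThan_telescope[of "\<lambda>k. real k powr (real i - \<alpha>)" n] by (simp add: add.commute)
  have "(1 - \<alpha>) * (\<Sum>k<n. cell_defect \<alpha> i (real k))
      = (1 - \<alpha>) * real i / (real i - \<alpha>)
          * (\<Sum>k<n. (real k + 1) powr (real i - \<alpha>) - real k powr (real i - \<alpha>))
        - (\<Sum>k<n. (real (Suc k) ^ i - real k ^ i)
                  * (real (Suc k) powr (1 - \<alpha>) - real k powr (1 - \<alpha>)))"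
    unfolding sum_distrib_left sum_subtractf[symmetric] using \<alpha>
    by (intro sum.cong refl) (simp add: cell_defect_def field_simps)
  also have "\<dots> = (1 - \<alpha>) * real i / (real i - \<alpha>) * real n powr (real i - \<alpha>)
                + (\<Sum>k=0..n. sigma_coef \<alpha> n k * real k ^ i)"
    unfolding tel[symmetric] using sigma_sum_by_parts[of n \<alpha> "\<lambda>k. real k ^ i"] n by simp
  finally show ?thesis using moment_defect_eq_sigma_moment[OF n, of \<alpha> i] i by simp
qed

lemma power_diff_bounds:
  fixes a b :: real
  assumes "0 \<le> b" "b \<le> a"
  shows "real (Suc m) * b ^ m * (a - b) \<le> a ^ Suc m - b ^ Suc m
    \<and> a ^ Suc m - b ^ Suc m \<le> real (Suc m) * a ^ m * (a - b)"
proof (induction m)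
  case 0
  then show ?case by simp
next
  case (Suc m)
  have "b * (real (Suc m) * b ^ m * (a - b)) \<le> a * (a ^ Suc m - b ^ Suc m)"
    using Suc assms by (intro mult_mono) auto
  moreover have "a * (a ^ Suc m - b ^ Suc m) \<le> a * (real (Suc m) * a ^ m * (a - b))"
    using Suc assms by (intro mult_left_mono) auto
  moreover have "b ^ Suc m * (a - b) \<le> a ^ Suc m * (a - b)"
    using assms by (intro mult_right_mono power_mono) auto
  ultimately show ?case by (simp add: algebra_simps)
qed

definition chord_deviation :: "nat \<Rightarrow> real \<Rightarrow> real \<Rightarrow> real" where
  "chord_deviation i k z = z ^ i - k ^ i - ((k + 1) ^ i - k ^ i) * (z - k)"

lemma chord_deviation_bound:
  fixes k z :: real
  assumes k: "0 \<le> k" and z: "k \<le> z" "z \<le> k + 1" and i: "i \<ge> 2"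
  shows "\<bar>chord_deviation i k z\<bar> \<le> real i * real (i - 1) * (k + 1) ^ (i - 2)"
proof -
  obtain m where m: "i = Suc (Suc m)" using i by (metis add_2_eq_Suc le_Suc_ex)
  define t where "t = z - k"
  define A where "A = (k + 1) ^ Suc m"
  define B where "B = k ^ Suc m"
  define D where "D = (k + 1) ^ i - k ^ i"
  have t: "0 \<le> t" "t \<le> 1" using z by (auto simp: t_def)
  have P1: "i * B * t \<le> z ^ i - k ^ i" "z ^ i - k ^ i \<le> i * z ^ Suc m * t"
    using power_diff_bounds[of k z "Suc m"] k z by (auto simp: m B_def t_def)
  have "z ^ Suc m \<le> A" unfolding A_def using k z by (intro power_mono) auto
  hence P1': "i * z ^ Suc m * t \<le> i * A * t" using t by (intro mult_right_mono mult_left_mono) auto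
  have P2: "i * B * t \<le> D * t" "D * t \<le> i * A * t"
    using power_diff_bounds[of k "k + 1" "Suc m"] k t by (auto simp: m B_def A_def D_def mult_right_mono)
  have "B \<le> A" unfolding A_def B_def using k by (intro power_mono) auto
  then have AB: "0 \<le> A - B" "A - B \<le> real (Suc m) * (k + 1) ^ m"
    using power_diff_bounds[of k "k + 1" m] k by (auto simp: A_def B_def)
  have "i * A * t - i * B * t = i * ((A - B) * t)" by (simp add: algebra_simps)
  also have "\<dots> \<le> i * (A - B)" using AB t mult_left_mono[of t 1 "A - B"] by (intro mult_left_mono) auto
  also have "\<dots> \<le> i * (real (Suc m) * (k + 1) ^ m)" using AB by (intro mult_left_mono) auto
  finally have "i * A * t - i * B * t \<le> real i * real (i - 1) * (k + 1) ^ (i - 2)" by (simp add: m)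
  then show ?thesis
    unfolding chord_deviation_def D_def[symmetric] t_def[symmetric] abs_le_iff using P1 P1' P2 by linarith
qed

text \<open>The antiderivative \<open>H\<close> below has derivative \<open>\<alpha> \<phi>(u) u\<^bsup>-\<alpha>-1\<^esup>\<close>, where \<open>\<phi>\<close> is the chord
  deviation; its increment over the cell is the cell defect.\<close>

lemma cell_defect_mean_value:
  fixes k :: real
  assumes \<alpha>: "0 < \<alpha>" "\<alpha> < 1" and k: "k > 0" and i: "i \<ge> 1"
  obtains z where "k < z" "z < k + 1"
    "cell_defect \<alpha> i k = \<alpha> * chord_deviation i k z * z powr (- \<alpha> - 1)"
proof -
  define D where "D = (k + 1) ^ i - k ^ i"
  define H where "H u = real i / (real i - \<alpha>) * u powr (real i - \<alpha>) - D / (1 - \<alpha>) * u powr (1 - \<alpha>)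
                       - (u ^ i - k ^ i - D * (u - k)) * u powr (- \<alpha>)" for u
  have ia: "real i - \<alpha> > 0" using i \<alpha> by simp
  have dH: "(H has_real_derivative \<alpha> * chord_deviation i k u * u powr (- \<alpha> - 1)) (at u)"
    if u: "u > 0" for u
  proof -
    have "real i - \<alpha> - 1 = real (i - 1) + (- \<alpha>)" using i by (simp add: of_nat_diff)
    then have pw: "u powr (real i - \<alpha> - 1) = u ^ (i - 1) * u powr (- \<alpha>)"
      by (simp only: powr_add powr_realpow[OF u])
    have d4: "((\<lambda>u. u ^ i - k ^ i - D * (u - k)) has_real_derivative real i * u ^ (i - 1) - D) (at u)"
      by (rule derivative_eq_intros refl | simp)+
    have "(H has_real_derivative
        real i / (real i - \<alpha>) * ((real i - \<alpha>) * u powr (real i - \<alpha> - 1))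
        - D / (1 - \<alpha>) * ((1 - \<alpha>) * u powr (- \<alpha>))
        - ((real i * u ^ (i - 1) - D) * u powr (- \<alpha>)
           + ((- \<alpha>) * u powr (- \<alpha> - 1)) * (u ^ i - k ^ i - D * (u - k)))) (at u)"
      unfolding H_def
      by (intro DERIV_diff DERIV_cmult DERIV_mult d4 has_real_derivative_powr u
          has_real_derivative_powr_one_minus)
    moreover have "real i / (real i - \<alpha>) * ((real i - \<alpha>) * u powr (real i - \<alpha> - 1))
        - D / (1 - \<alpha>) * ((1 - \<alpha>) * u powr (- \<alpha>))
        - ((real i * u ^ (i - 1) - D) * u powr (- \<alpha>)
           + ((- \<alpha>) * u powr (- \<alpha> - 1)) * (u ^ i - k ^ i - D * (u - k)))
        = \<alpha> * chord_deviation i k u * u powr (- \<alpha> - 1)"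
    proof -
      have e1: "real i / (real i - \<alpha>) * ((real i - \<alpha>) * X) = real i * X" for X using ia by simp
      have e2: "D / (1 - \<alpha>) * ((1 - \<alpha>) * X) = D * X" for X using \<alpha> by simp
      show ?thesis unfolding e1 e2 pw chord_deviation_def D_def[symmetric] by (simp add: algebra_simps)
    qed
    ultimately show ?thesis by (rule DERIV_cong)
  qed
  obtain z where z: "k < z" "z < k + 1"
    "H (k + 1) - H k = (k + 1 - k) * (\<alpha> * chord_deviation i k z * z powr (- \<alpha> - 1))"
    using MVT2[of k "k + 1" H "\<lambda>u. \<alpha> * chord_deviation i k u * u powr (- \<alpha> - 1)"] dH k by force
  moreover have "H (k + 1) - H k = cell_defect \<alpha> i k"
  proof -
    have h1: "H (k + 1) = real i / (real i - \<alpha>) * (k + 1) powr (real i - \<alpha>) - D / (1 - \<alpha>) * (k + 1) powr (1 - \<alpha>)"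
      unfolding H_def D_def by simp
    have h2: "H k = real i / (real i - \<alpha>) * k powr (real i - \<alpha>) - D / (1 - \<alpha>) * k powr (1 - \<alpha>)"
      unfolding H_def by simp
    show ?thesis unfolding h1 h2 cell_defect_def D_def[symmetric] by (simp add: algebra_simps diff_divide_distrib)
  qed
  ultimately show ?thesis using that by auto
qed

lemma cell_defect_bound:
  assumes \<alpha>: "0 < \<alpha>" "\<alpha> < 1" and k: "1 \<le> k" "k \<le> n" and i: "i \<ge> 3"
  shows "\<bar>cell_defect \<alpha> i (real k)\<bar>
    \<le> \<alpha> * real i * real (i - 1) * 2 ^ (i - 2) * real n ^ (i - 3) * real k powr (- \<alpha>)"
proof -
  have kp: "real k > 0" using k by simp
  obtain z where z: "real k < z" "z < real k + 1"
    and eq: "cell_defect \<alpha> i (real k) = \<alpha> * chord_deviation i (real k) z * z powr (- \<alpha> - 1)"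
    using cell_defect_mean_value[OF \<alpha> kp] i by (metis le_trans one_le_numeral)
  have "\<bar>chord_deviation i (real k) z\<bar> \<le> real i * real (i - 1) * (real k + 1) ^ (i - 2)"
    using z i by (intro chord_deviation_bound) auto
  also have "\<dots> \<le> real i * real (i - 1) * (2 ^ (i - 2) * real k ^ (i - 2))"
    unfolding power_mult_distrib[symmetric] using k by (intro mult_left_mono power_mono) auto
  moreover
  have "z powr (- \<alpha> - 1) \<le> real k powr (- \<alpha> - 1)" using z kp \<alpha> by (intro powr_mono2') auto
  ultimately have "\<bar>cell_defect \<alpha> i (real k)\<bar>
      \<le> \<alpha> * (real i * real (i - 1) * (2 ^ (i - 2) * real k ^ (i - 2))) * real k powr (- \<alpha> - 1)"
    unfolding eq abs_mult using \<alpha> z kp by (intro mult_mono) auto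
  also have "\<dots> = \<alpha> * real i * real (i - 1) * 2 ^ (i - 2) * (real k ^ (i - 2) * real k powr (- \<alpha> - 1))"
    by (simp only: mult_ac)
  also have "real k ^ (i - 2) * real k powr (- \<alpha> - 1) = real k ^ (i - 3) * real k powr (- \<alpha>)"
  proof -
    have "i - 2 = Suc (i - 3)" using i by simp
    then have "real k ^ (i - 2) = real k ^ (i - 3) * real k" by (simp only: power_Suc2)
    moreover have "real k * real k powr (- \<alpha> - 1) = real k powr (- \<alpha>)"
      using powr_mult_base[of "real k" "- \<alpha> - 1"] kp by simp
    ultimately show ?thesis by (simp add: mult.assoc)
  qed
  also have "\<alpha> * real i * real (i - 1) * 2 ^ (i - 2) * (real k ^ (i - 3) * real k powr (- \<alpha>))
      \<le> \<alpha> * real i * real (i - 1) * 2 ^ (i - 2) * (real n ^ (i - 3) * real k powr (- \<alpha>))"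
    using k \<alpha> i by (intro mult_left_mono mult_right_mono power_mono) auto
  finally show ?thesis by (simp only: mult_ac)
qed

lemma sum_powr_neg_le:
  assumes \<alpha>: "0 < \<alpha>" "\<alpha> < 1"
  shows "(\<Sum>k=1..m. real k powr (- \<alpha>)) \<le> real m powr (1 - \<alpha>) / (1 - \<alpha>)"
proof (induction m)
  case 0
  then show ?case by simp
next
  case (Suc m)
  have "(1 - \<alpha>) * real (Suc m) powr (- \<alpha>) \<le> real (Suc m) powr (1 - \<alpha>) - real m powr (1 - \<alpha>)"
  proof (cases "m = 0")
    case True
    then show ?thesis using \<alpha> by simp
  next
    case False
    then obtain c where c: "real m < c" "c < real m + 1"
      "(real m + 1) powr (1 - \<alpha>) - real m powr (1 - \<alpha>) = (real m + 1 - real m) * ((1 - \<alpha>) * c powr (- \<alpha>))"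
      using MVT2[of "real m" "real m + 1" "\<lambda>u. u powr (1 - \<alpha>)" "\<lambda>u. (1 - \<alpha>) * u powr (- \<alpha>)"]
        has_real_derivative_powr_one_minus by force
    have "(real m + 1) powr (- \<alpha>) \<le> c powr (- \<alpha>)" using c False \<alpha> by (intro powr_mono2') auto
    then show ?thesis using c(3) \<alpha> by (simp add: add.commute)
  qed
  moreover have "(1 - \<alpha>) * (\<Sum>k=1..m. real k powr (- \<alpha>)) \<le> real m powr (1 - \<alpha>)"
    using Suc \<alpha> by (simp add: field_simps)
  ultimately have "(1 - \<alpha>) * (\<Sum>k=1..Suc m. real k powr (- \<alpha>)) \<le> real (Suc m) powr (1 - \<alpha>)"
    by (simp add: distrib_left del: of_nat_Suc)
  then show ?case using \<alpha> by (simp add: pos_le_divide_eq mult.commute del: of_nat_Suc)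
qed

lemma sum_cell_defect_bound:
  assumes \<alpha>: "0 < \<alpha>" "\<alpha> < 1" and n: "n \<ge> 1" and i: "i \<ge> 3"
  shows "\<bar>\<Sum>k<n. cell_defect \<alpha> i (real k)\<bar>
    \<le> (real i / (real i - \<alpha>) + 1 / (1 - \<alpha>))
      + \<alpha> * real i * real (i - 1) * 2 ^ (i - 2) / (1 - \<alpha>) * real n powr (real i - 2 - \<alpha>)"
proof -
  define c where "c = \<alpha> * real i * real (i - 1) * 2 ^ (i - 2)"
  have c: "c \<ge> 0" unfolding c_def using \<alpha> by simp
  have "\<bar>cell_defect \<alpha> i 0\<bar> = \<bar>real i / (real i - \<alpha>) - 1 / (1 - \<alpha>)\<bar>"
    using i by (simp add: cell_defect_def power_0_left)
  also have "\<dots> \<le> real i / (real i - \<alpha>) + 1 / (1 - \<alpha>)" using \<alpha> i by (simp add: abs_le_iff)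
  finally have first: "\<bar>cell_defect \<alpha> i 0\<bar> \<le> real i / (real i - \<alpha>) + 1 / (1 - \<alpha>)" .
  have powers: "(\<Sum>k\<in>{1..<n}. real k powr (- \<alpha>)) \<le> real n powr (1 - \<alpha>) / (1 - \<alpha>)"
  proof -
    have "{1..<n} = {1..n - 1}" using n by auto
    then have "(\<Sum>k\<in>{1..<n}. real k powr (- \<alpha>)) \<le> real (n - 1) powr (1 - \<alpha>) / (1 - \<alpha>)"
      using sum_powr_neg_le[OF \<alpha>, of "n - 1"] by simp
    also have "\<dots> \<le> real n powr (1 - \<alpha>) / (1 - \<alpha>)"
      using \<alpha> by (intro divide_right_mono powr_mono2) auto
    finally show ?thesis .
  qed
  have "\<bar>\<Sum>k\<in>{1..<n}. cell_defect \<alpha> i (real k)\<bar>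
      \<le> (\<Sum>k\<in>{1..<n}. c * real n ^ (i - 3) * real k powr (- \<alpha>))"
    by (rule order_trans[OF sum_abs sum_mono]) (use cell_defect_bound[OF \<alpha> _ _ i] in \<open>auto simp: c_def\<close>)
  also have "\<dots> = c * real n ^ (i - 3) * (\<Sum>k\<in>{1..<n}. real k powr (- \<alpha>))"
    by (simp add: sum_distrib_left)
  also have "\<dots> \<le> c * real n ^ (i - 3) * (real n powr (1 - \<alpha>) / (1 - \<alpha>))"
    using c powers by (intro mult_left_mono) auto
  also have "\<dots> = c / (1 - \<alpha>) * (real n ^ (i - 3) * real n powr (1 - \<alpha>))"
    by simp
  also have "real n ^ (i - 3) * real n powr (1 - \<alpha>) = real n powr (real i - 2 - \<alpha>)"
    using n i by (simp add: powr_realpow[symmetric] powr_add[symmetric] of_nat_diff) (simp add: algebra_simps)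
  finally have rest: "\<bar>\<Sum>k\<in>{1..<n}. cell_defect \<alpha> i (real k)\<bar>
      \<le> c / (1 - \<alpha>) * real n powr (real i - 2 - \<alpha>)" .
  have "{..<n} = insert 0 {1..<n}" using n by auto
  then show ?thesis using first rest unfolding c_def by simp
qed

lemma moment_defect_bound_higher:
  assumes \<alpha>: "0 < \<alpha>" "\<alpha> < 1" and i: "i \<ge> 3"
  shows "\<exists>K. \<forall>n\<ge>2. \<bar>moment_defect \<alpha> n i\<bar> \<le> K * real n powr (real i - 2 - \<alpha>)"
proof -
  define S where "S = real i / (real i - \<alpha>) + 1 / (1 - \<alpha>)"
  define c where "c = \<alpha> * real i * real (i - 1) * 2 ^ (i - 2) / (1 - \<alpha>)"
  define z where "z = \<bar>zeta_real (\<alpha> - 1)\<bar> * 2 ^ i"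
  have "\<bar>moment_defect \<alpha> n i\<bar> \<le> ((1 - \<alpha>) * (S + c) + z) * real n powr (real i - 2 - \<alpha>)"
    if n: "n \<ge> 2" for n
  proof -
    define P where "P = real n powr (real i - 2 - \<alpha>)"
    have P: "1 \<le> P" unfolding P_def using n i \<alpha> by (intro ge_one_powr_ge_zero) auto
    have S: "0 \<le> S" unfolding S_def using \<alpha> i by simp
    have "\<bar>(2::real) ^ i - 2\<bar> \<le> 2 ^ i"
      using i power_increasing[of 1 i "2::real"] by simp
    hence zeta: "\<bar>zeta_real (\<alpha> - 1) * (2 ^ i - 2)\<bar> \<le> z"
      unfolding z_def abs_mult by (simp add: mult_left_mono)
    have "\<bar>\<Sum>k<n. cell_defect \<alpha> i (real k)\<bar> \<le> S + c * P"
      using sum_cell_defect_bound[OF \<alpha> _ i, of n] n unfolding S_def c_def P_def by simp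
    hence cells: "\<bar>(1 - \<alpha>) * (\<Sum>k<n. cell_defect \<alpha> i (real k))\<bar> \<le> (1 - \<alpha>) * (S + c * P)"
      using \<alpha> by (simp add: abs_mult mult_left_mono)
    have i1: "i \<ge> 1" using i by simp
    have "\<bar>moment_defect \<alpha> n i\<bar>
        \<le> \<bar>(1 - \<alpha>) * (\<Sum>k<n. cell_defect \<alpha> i (real k))\<bar> + \<bar>zeta_real (\<alpha> - 1) * (2 ^ i - 2)\<bar>"
      unfolding moment_defect_eq_cell_defect_sum[OF \<alpha> n i1] by (rule abs_triangle_ineq4)
    also have "\<dots> \<le> (1 - \<alpha>) * (S + c * P) + z" using cells zeta by (rule add_mono)
    also have "\<dots> \<le> ((1 - \<alpha>) * (S + c) + z) * P"
    proof -
      have "(1 - \<alpha>) * S * 1 \<le> (1 - \<alpha>) * S * P" using P S \<alpha> by (intro mult_left_mono) auto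
      moreover have "z * 1 \<le> z * P" using P by (intro mult_left_mono) (auto simp: z_def)
      ultimately show ?thesis by (simp add: algebra_simps)
    qed
    finally show ?thesis unfolding P_def .
  qed
  then show ?thesis by blast
qed

lemma moment_defect_bound:
  assumes \<alpha>: "0 < \<alpha>" "\<alpha> < 1"
  shows "\<exists>K. \<forall>n\<ge>2. \<bar>moment_defect \<alpha> n i\<bar> \<le> K * real n powr (real i - 2 - \<alpha>)"
proof -
  consider "i = 0" | "i = 1" | "i = 2" | "i \<ge> 3" by linarith
  then show ?thesis
  proof cases
    case 1
    then show ?thesis using moment_defect_0 by (metis abs_zero mult_zero_left order_refl)
  next
    case 2
    then show ?thesis using moment_defect_1 \<alpha> by (metis abs_zero mult_zero_left order_refl)
  next
    case 3
    then show ?thesis using moment_defect_2_bound[OF \<alpha>] by auto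
  next
    case 4
    then show ?thesis by (rule moment_defect_bound_higher[OF \<alpha>])
  qed
qed

section \<open>The Caputo derivative of a polynomial\<close>

lemma poly_eq_sum_powers_around:
  fixes p :: "real poly"
  shows "poly p \<xi> = (\<Sum>i\<le>degree (p \<circ>\<^sub>p [:x, -1:]). coeff (p \<circ>\<^sub>p [:x, -1:]) i * (x - \<xi>) ^ i)"
proof -
  have "poly (p \<circ>\<^sub>p [:x, -1:]) (x - \<xi>) = poly p \<xi>" by (simp add: poly_pcompose)
  thus ?thesis by (simp add: poly_altdef)
qed

lemma deriv_poly_eq_sum_powers_around:
  fixes p :: "real poly" and x \<xi> :: real
  defines "q \<equiv> p \<circ>\<^sub>p [:x, -1:]"
  shows "deriv (poly p) \<xi> = (\<Sum>i\<le>degree q. coeff q i * (- real i * (x - \<xi>) ^ (i - 1)))"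
proof -
  have "poly p = (\<lambda>\<xi>. \<Sum>i\<le>degree q. coeff q i * (x - \<xi>) ^ i)"
    unfolding q_def by (rule ext) (rule poly_eq_sum_powers_around)
  moreover have "((\<lambda>\<xi>. \<Sum>i\<le>degree q. coeff q i * (x - \<xi>) ^ i) has_real_derivative
      (\<Sum>i\<le>degree q. coeff q i * (- real i * (x - \<xi>) ^ (i - 1)))) (at \<xi>)"
    by (rule derivative_eq_intros refl | simp add: mult_ac)+
  ultimately show ?thesis by (simp add: DERIV_imp_deriv)
qed

lemma has_integral_caputo_kernel_power:
  fixes x \<alpha> :: real and i :: nat
  assumes \<alpha>: "0 < \<alpha>" "\<alpha> < 1" and x: "x > 0"
  shows "((\<lambda>\<xi>. - real i * (x - \<xi>) ^ (i - 1) / (x - \<xi>) powr \<alpha>)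
           has_integral (- (real i / (real i - \<alpha>)) * x powr (real i - \<alpha>))) {0..x}"
proof (cases "i = 0")
  case True
  then show ?thesis by simp
next
  case False
  have ia: "real i - \<alpha> > 0" using \<alpha> False by simp
  define F where "F \<xi> = real i / (real i - \<alpha>) * (x - \<xi>) powr (real i - \<alpha>)" for \<xi>
  have cont: "continuous_on {0..x} F"
    unfolding F_def using ia
    by (intro continuous_on_mult continuous_on_const continuous_on_powr' continuous_on_diff continuous_on_id) auto
  have der: "(F has_vector_derivative (- real i * (x - \<xi>) powr (real i - \<alpha> - 1))) (at \<xi>)"
    if "\<xi> \<in> {0<..<x}" for \<xi>
  proof -
    have "(F has_real_derivative real i / (real i - \<alpha>)
             * ((real i - \<alpha>) * (x - \<xi>) powr (real i - \<alpha> - 1) * (0 - 1))) (at \<xi>)"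
      unfolding F_def using that by (intro DERIV_cmult DERIV_fun_powr derivative_intros) auto
    then show ?thesis using ia
      by (simp add: has_real_derivative_iff_has_vector_derivative[symmetric])
  qed
  have "((\<lambda>\<xi>. - real i * (x - \<xi>) powr (real i - \<alpha> - 1)) has_integral (F x - F 0)) {0..x}"
    using fundamental_theorem_of_calculus_interior[OF _ cont der] x by simp
  moreover have "- real i * (x - \<xi>) ^ (i - 1) / (x - \<xi>) powr \<alpha> = - real i * (x - \<xi>) powr (real i - \<alpha> - 1)"
    if "\<xi> \<in> box 0 x" for \<xi>
  proof -
    have pos: "x - \<xi> > 0" using that by (simp add: box_real)
    have "(x - \<xi>) ^ (i - 1) / (x - \<xi>) powr \<alpha> = (x - \<xi>) powr (real (i - 1) - \<alpha>)"
      using pos by (simp add: powr_realpow[symmetric] powr_diff)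
    also have "real (i - 1) - \<alpha> = real i - \<alpha> - 1" using False by (simp add: of_nat_diff)
    finally show ?thesis by (simp add: mult.assoc times_divide_eq_right[symmetric] del: times_divide_eq_right)
  qed
  ultimately show ?thesis
    using has_integral_spike_interior[of "\<lambda>\<xi>. - real i * (x - \<xi>) powr (real i - \<alpha> - 1)" "F x - F 0" 0 x]
    by (simp add: cbox_interval F_def)
qed

lemma caputo_poly:
  fixes p :: "real poly"
  assumes "0 < \<alpha>" "\<alpha> < 1" "0 < x"
  defines "q \<equiv> p \<circ>\<^sub>p [:x, -1:]"
  shows "caputo \<alpha> (poly p) x
    = (\<Sum>i\<le>degree q. coeff q i * (- (real i / (real i - \<alpha>)) * x powr (real i - \<alpha>))) / Gamma (1 - \<alpha>)"
proof -
  have integrand: "deriv (poly p) \<xi> / (x - \<xi>) powr \<alpha>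
      = (\<Sum>i\<le>degree q. coeff q i * (- real i * (x - \<xi>) ^ (i - 1) / (x - \<xi>) powr \<alpha>))" for \<xi>
    unfolding deriv_poly_eq_sum_powers_around[where x = x] q_def by (simp add: sum_divide_distrib)
  have "((\<lambda>\<xi>. \<Sum>i\<le>degree q. coeff q i * (- real i * (x - \<xi>) ^ (i - 1) / (x - \<xi>) powr \<alpha>))
      has_integral (\<Sum>i\<le>degree q. coeff q i * (- (real i / (real i - \<alpha>)) * x powr (real i - \<alpha>)))) {0..x}"
    by (intro has_integral_sum has_integral_mult_right has_integral_caputo_kernel_power assms) auto
  then show ?thesis unfolding caputo_def integrand by (simp add: integral_unique)
qed

section \<open>The error of the scheme\<close>

text \<open>The error of the scheme for \<open>y(\<xi>) = (x - \<xi>)\<^sup>i\<close>, whose samples are \<open>y\<^sub>n\<^sub>-\<^sub>k = (k h)\<^sup>i\<close>; the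
  first term is the Caputo derivative of \<open>y\<close> at \<open>x\<close>.\<close>

definition monomial_error :: "real \<Rightarrow> real \<Rightarrow> nat \<Rightarrow> nat \<Rightarrow> real" where
  "monomial_error \<alpha> x n i =
     - (real i / (real i - \<alpha>)) * x powr (real i - \<alpha>) / Gamma (1 - \<alpha>)
     - (x / real n) ^ i * (\<Sum>k=0..n. delta_coef \<alpha> n k * real k ^ i)
         / (Gamma (2 - \<alpha>) * (x / real n) powr \<alpha>)"

lemma scheme_error_poly:
  fixes p :: "real poly"
  assumes "0 < \<alpha>" "\<alpha> < 1" "0 < x" "n > 0"
  defines "q \<equiv> p \<circ>\<^sub>p [:x, -1:]"
  shows "caputo \<alpha> (poly p) x
      - (1 / (Gamma (2 - \<alpha>) * (x / real n) powr \<alpha>)) *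
        (\<Sum>k=0..n. delta_coef \<alpha> n k * poly p (real (n - k) * (x / real n)))
    = (\<Sum>i\<le>degree q. coeff q i * monomial_error \<alpha> x n i)"
proof -
  define h where "h = x / real n"
  have "poly p (real (n - k) * h) = (\<Sum>i\<le>degree q. coeff q i * h ^ i * real k ^ i)" if "k \<le> n" for k
  proof -
    have "x - real (n - k) * h = real k * h" using that assms by (simp add: h_def of_nat_diff field_simps)
    then show ?thesis unfolding q_def poly_eq_sum_powers_around[of p _ x]
      by (simp add: power_mult_distrib mult_ac)
  qed
  hence "(\<Sum>k=0..n. delta_coef \<alpha> n k * poly p (real (n - k) * h))
      = (\<Sum>k=0..n. \<Sum>i\<le>degree q. coeff q i * h ^ i * (delta_coef \<alpha> n k * real k ^ i))"
    by (intro sum.cong refl) (simp add: sum_distrib_left mult_ac)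
  also have "\<dots> = (\<Sum>i\<le>degree q. coeff q i * h ^ i * (\<Sum>k=0..n. delta_coef \<alpha> n k * real k ^ i))"
    by (subst sum.swap) (simp add: sum_distrib_left)
  finally have scheme: "(\<Sum>k=0..n. delta_coef \<alpha> n k * poly p (real (n - k) * h))
      = (\<Sum>i\<le>degree q. coeff q i * h ^ i * (\<Sum>k=0..n. delta_coef \<alpha> n k * real k ^ i))" .
  have "(\<Sum>i\<le>degree q. coeff q i * monomial_error \<alpha> x n i)
      = (\<Sum>i\<le>degree q. coeff q i * (- (real i / (real i - \<alpha>)) * x powr (real i - \<alpha>))) / Gamma (1 - \<alpha>)
        - 1 / (Gamma (2 - \<alpha>) * h powr \<alpha>)
          * (\<Sum>i\<le>degree q. coeff q i * h ^ i * (\<Sum>k=0..n. delta_coef \<alpha> n k * real k ^ i))"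
    unfolding monomial_error_def h_def[symmetric] sum_divide_distrib sum_distrib_left sum_subtractf[symmetric]
    by (intro sum.cong refl) (simp add: algebra_simps sum_distrib_left)
  then show ?thesis
    unfolding caputo_poly[OF assms(1-3), of p, folded q_def] scheme[unfolded h_def] h_def by simp
qed

lemma monomial_error_eq:
  assumes \<alpha>: "0 < \<alpha>" "\<alpha> < 1" and x: "0 < x" and n: "n > 0"
  shows "monomial_error \<alpha> x n i
    = - ((x / real n) powr (real i - \<alpha>) / Gamma (2 - \<alpha>)) * moment_defect \<alpha> n i"
proof -
  define h where "h = x / real n"
  have h: "h > 0" using x n by (simp add: h_def)
  have "1 - \<alpha> \<notin> \<int>\<^sub>\<le>\<^sub>0" using \<alpha> nonpos_Ints_nonpos by fastforce
  then have "Gamma (1 - \<alpha> + 1) = (1 - \<alpha>) * Gamma (1 - \<alpha>)" by (rule Gamma_plus1)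
  moreover have "1 - \<alpha> + 1 = 2 - \<alpha>" by simp
  ultimately have "Gamma (2 - \<alpha>) = (1 - \<alpha>) * Gamma (1 - \<alpha>)" by simp
  then have gamma: "Gamma (1 - \<alpha>) = Gamma (2 - \<alpha>) / (1 - \<alpha>)" using \<alpha> by simp
  have "Gamma (2 - \<alpha>) > 0" using \<alpha> by simp
  then have G: "Gamma (2 - \<alpha>) \<noteq> 0" by simp
  have i_ne: "real i - \<alpha> \<noteq> 0" using \<alpha> by (cases i) auto
  have x_pow: "x powr (real i - \<alpha>) = real n powr (real i - \<alpha>) * h powr (real i - \<alpha>)"
    using n by (simp add: h_def powr_mult[symmetric])
  have h_pow: "h ^ i * M / (c * h powr \<alpha>) = h powr (real i - \<alpha>) * M / c" for M c
    using h by (simp add: powr_realpow[symmetric] powr_diff)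
  show ?thesis
    unfolding monomial_error_def moment_defect_def h_def[symmetric] gamma x_pow h_pow
    using \<alpha> G i_ne by (simp add: field_simps)
qed

lemma monomial_error_bound:
  assumes \<alpha>: "0 < \<alpha>" "\<alpha> < 1" and x: "0 < x"
  shows "\<exists>K. \<forall>n\<ge>2. \<bar>monomial_error \<alpha> x n i\<bar> \<le> K * (x / real n) ^ 2"
proof -
  obtain K where K: "\<And>n. n \<ge> 2 \<Longrightarrow> \<bar>moment_defect \<alpha> n i\<bar> \<le> K * real n powr (real i - 2 - \<alpha>)"
    using moment_defect_bound[OF \<alpha>] by blast
  have "\<bar>monomial_error \<alpha> x n i\<bar> \<le> K * x powr (real i - 2 - \<alpha>) / Gamma (2 - \<alpha>) * (x / real n) ^ 2"
    if n: "n \<ge> 2" for n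
  proof -
    define h where "h = x / real n"
    have h: "h > 0" using x n by (simp add: h_def)
    have "Gamma (2 - \<alpha>) > 0" using \<alpha> by simp
    then have scale: "0 \<le> h powr (real i - \<alpha>) / Gamma (2 - \<alpha>)" by simp
    have "monomial_error \<alpha> x n i = - (h powr (real i - \<alpha>) / Gamma (2 - \<alpha>)) * moment_defect \<alpha> n i"
      unfolding h_def by (rule monomial_error_eq[OF \<alpha> x]) (use n in simp)
    then have "\<bar>monomial_error \<alpha> x n i\<bar> = h powr (real i - \<alpha>) / Gamma (2 - \<alpha>) * \<bar>moment_defect \<alpha> n i\<bar>"
      by (simp only: abs_mult abs_minus abs_of_nonneg[OF scale])
    also have "\<dots> \<le> h powr (real i - \<alpha>) / Gamma (2 - \<alpha>) * (K * real n powr (real i - 2 - \<alpha>))"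
      using K[OF n] scale by (rule mult_left_mono)
    also have "h powr (real i - \<alpha>) = h ^ 2 * h powr (real i - 2 - \<alpha>)"
      using h powr_add[of h 2 "real i - 2 - \<alpha>"] by simp
    also have "h ^ 2 * h powr (real i - 2 - \<alpha>) / Gamma (2 - \<alpha>) * (K * real n powr (real i - 2 - \<alpha>))
        = K * (h powr (real i - 2 - \<alpha>) * real n powr (real i - 2 - \<alpha>)) / Gamma (2 - \<alpha>) * h ^ 2"
      by (simp add: mult_ac)
    also have "h powr (real i - 2 - \<alpha>) * real n powr (real i - 2 - \<alpha>) = x powr (real i - 2 - \<alpha>)"
      using n by (simp add: h_def powr_mult[symmetric])
    finally show ?thesis unfolding h_def .
  qed
  then show ?thesis by blast
qed

theorem corollary7:
  fixes \<alpha> x :: real and p :: "real poly"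
  assumes "0 < \<alpha>" and "\<alpha> < 1" and "0 < x"
  shows "\<exists>C. \<exists>N\<ge>2. \<forall>n\<ge>N.
           \<bar>caputo \<alpha> (poly p) x
             - (1 / (Gamma (2 - \<alpha>) * (x / real n) powr \<alpha>)) *
               (\<Sum>k=0..n. delta_coef \<alpha> n k * poly p (real (n - k) * (x / real n)))\<bar>
           \<le> C * (x / real n)^2"
proof -
  define q where "q = p \<circ>\<^sub>p [:x, -1:]"
  obtain K where K: "\<And>i n. n \<ge> 2 \<Longrightarrow> \<bar>monomial_error \<alpha> x n i\<bar> \<le> K i * (x / real n) ^ 2"
    using monomial_error_bound[OF assms] by metis
  have "\<bar>caputo \<alpha> (poly p) x
          - (1 / (Gamma (2 - \<alpha>) * (x / real n) powr \<alpha>)) *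
            (\<Sum>k=0..n. delta_coef \<alpha> n k * poly p (real (n - k) * (x / real n)))\<bar>
        \<le> (\<Sum>i\<le>degree q. \<bar>coeff q i\<bar> * K i) * (x / real n) ^ 2" if n: "n \<ge> 2" for n
  proof -
    have "\<bar>\<Sum>i\<le>degree q. coeff q i * monomial_error \<alpha> x n i\<bar>
        \<le> (\<Sum>i\<le>degree q. \<bar>coeff q i\<bar> * (K i * (x / real n) ^ 2))"
      by (rule order_trans[OF sum_abs sum_mono]) (simp add: abs_mult mult_left_mono K n)
    also have "\<dots> = (\<Sum>i\<le>degree q. \<bar>coeff q i\<bar> * K i) * (x / real n) ^ 2"
      by (simp add: sum_distrib_right mult.assoc)
    finally show ?thesis
      using n unfolding q_def by (subst scheme_error_poly[OF assms]) simp_all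
  qed
  then show ?thesis by blast
qed

end
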